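(* Let $\mathfrak{C}=(U,M,I,N,J)$ be a formal decision context. Then the set of necessary II-decision rules of $\mathfrak{C}$ is $$\overline{\mathfrak{R}}_{II}(\mathfrak{C})=\{(O^{\square_M\lozenge_M},O^{\square_M})\rightarrow(\cap[O]_{S_2},(\cap[O]_{S_2})^{\lozenge_N})\mid O\in\mathrm{Ext}L_P(\mathfrak{C}_N)\}.$$
   Context: Formal context $(U,M,I)$: $U$ and $M$ are finite nonempty sets and $I\subseteq U\times M$. For $O\subseteq U$ and $C\subseteq M$ define: - $O^{\lozenge}=\{a\in M\mid\exists x\in O\,((x,a)\in I)\}$ and $C^{\square}=\{x\in U\mid \forall a\in M\,((x,a)\in I\Rightarrow a\in C)\}$; - $O^{\square}=\{a\in M\mid \forall x\in U\,((x,a)\in I\Rightarrow x\in O)\}$ and $C^{\lozenge}=\{x\in U\mid \exists a\in C\,((x,a)\in I)\}$. An object-oriented concept is a pair $(O,C)$ with $O^\square=C$ and $C^\lozenge=O$ (set $L_O$). A property-oriented concept is a pair $(O,C)$ with $O^\lozenge=C$ and $C^\square=O$ (set $L_P$). $\mathrm{Ext}$ denotes the set of extents. Standing assumption: contexts are canonical, i.e. every object has at least one attribute and not all attributes, and every attribute is possessed by at least one object and not by all objects. A formal decision context $\mathfrak{C}=(U,M,I,N,J)$ has conditional context $\mathfrak{C}_M=(U,M,I)$ and decision context $\mathfrak{C}_N=(U,N,J)$, with $M\cap N=\emptyset$. Subscripts $M$ and $N$ indicate the context in which an operator is computed. A II-decision rule is $(O,C)\rightarrow(Y,D)$ with $(O,C)\in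 L_O(\mathfrak{C}_M)$, $(Y,D)\in L_P(\mathfrak{C}_N)$ and $O\subseteq Y$; the set of these is $\mathfrak{R}_{II}(\mathfrak{C})$. Implication: $(O_1,C_1)\rightarrow(Y_1,D_1)\Rightarrow(O_2,C_2)\rightarrow(Y_2,D_2)$ iff $O_2\subseteq O_1\subseteq Y_1\subseteq Y_2$. A rule $r$ is necessary if there is no $r_1\in\mathfrak{R}_{II}(\mathfrak{C})\setminus\{r\}$ with $r_1\Rightarrow r$. $S_2$ is the equivalence relation on $\mathrm{Ext}L_P(\mathfrak{C}_N)$ given by $(O,Y)\in S_2$ iff $O^{\square_M}=Y^{\square_M}$. $[O]_{S_2}$ is the class of $O$, and $\cap[O]_{S_2}$ is the intersection of its members. *)

theory Defs
  imports Main
begin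

definition formal_context :: "'u set \<Rightarrow> 'm set \<Rightarrow> ('u \<times> 'm) set \<Rightarrow> bool" where
  "formal_context U M I \<longleftrightarrow> finite U \<and> U \<noteq> {} \<and> finite M \<and> M \<noteq> {} \<and> I \<subseteq> U \<times> M"

definition canonical :: "'u set \<Rightarrow> 'm set \<Rightarrow> ('u \<times> 'm) set \<Rightarrow> bool" where
  "canonical U M I \<longleftrightarrow>
     (\<forall>x\<in>U. (\<exists>a\<in>M. (x,a) \<in> I) \<and> (\<exists>a\<in>M. (x,a) \<notin> I)) \<and>
     (\<forall>a\<in>M. (\<exists>x\<in>U. (x,a) \<in> I) \<and> (\<exists>x\<in>U. (x,a) \<notin> I))"

definition dia_obj :: "'u set \<Rightarrow> 'm set \<Rightarrow> ('u \<times> 'm) set \<Rightarrow> 'u set \<Rightarrow> 'm set" where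
  "dia_obj U M I X = {a \<in> M. \<exists>x\<in>X. (x,a) \<in> I}"

definition box_attr :: "'u set \<Rightarrow> 'm set \<Rightarrow> ('u \<times> 'm) set \<Rightarrow> 'm set \<Rightarrow> 'u set" where
  "box_attr U M I C = {x \<in> U. \<forall>a\<in>M. (x,a) \<in> I \<longrightarrow> a \<in> C}"

definition box_obj :: "'u set \<Rightarrow> 'm set \<Rightarrow> ('u \<times> 'm) set \<Rightarrow> 'u set \<Rightarrow> 'm set" where
  "box_obj U M I X = {a \<in> M. \<forall>x\<in>U. (x,a) \<in> I \<longrightarrow> x \<in> X}"

definition dia_attr :: "'u set \<Rightarrow> 'm set \<Rightarrow> ('u \<times> 'm) set \<Rightarrow> 'm set \<Rightarrow> 'u set" where
  "dia_attr U M I C = {x \<in> U. \<exists>a\<in>C. (x,a) \<in> I}"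

definition L_O :: "'u set \<Rightarrow> 'm set \<Rightarrow> ('u \<times> 'm) set \<Rightarrow> ('u set \<times> 'm set) set" where
  "L_O U M I = {(X, C). X \<subseteq> U \<and> C \<subseteq> M \<and> box_obj U M I X = C \<and> dia_attr U M I C = X}"

definition L_P :: "'u set \<Rightarrow> 'm set \<Rightarrow> ('u \<times> 'm) set \<Rightarrow> ('u set \<times> 'm set) set" where
  "L_P U M I = {(X, C). X \<subseteq> U \<and> C \<subseteq> M \<and> dia_obj U M I X = C \<and> box_attr U M I C = X}"

definition Ext :: "('u set \<times> 'm set) set \<Rightarrow> 'u set set" where
  "Ext L = fst ` L"

(* A II-decision rule (X,C) \<rightarrow> (Y,D) is represented as the pair ((X,C),(Y,D)). *)
type_synonym ('u,'m,'n) rule = "('u set \<times> 'm set) \<times> ('u set \<times> 'n set)"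

definition rules_II ::
  "'u set \<Rightarrow> 'm set \<Rightarrow> ('u \<times> 'm) set \<Rightarrow> 'n set \<Rightarrow> ('u \<times> 'n) set \<Rightarrow> ('u,'m,'n) rule set" where
  "rules_II U M I N J =
     {((X, C), (Y, D)). (X, C) \<in> L_O U M I \<and> (Y, D) \<in> L_P U N J \<and> X \<subseteq> Y}"

definition rule_implies :: "('u,'m,'n) rule \<Rightarrow> ('u,'m,'n) rule \<Rightarrow> bool" where
  "rule_implies r1 r2 \<longleftrightarrow>
     fst (fst r2) \<subseteq> fst (fst r1) \<and> fst (fst r1) \<subseteq> fst (snd r1) \<and> fst (snd r1) \<subseteq> fst (snd r2)"

definition necessary_rules_II ::
  "'u set \<Rightarrow> 'm set \<Rightarrow> ('u \<times> 'm) set \<Rightarrow> 'n set \<Rightarrow> ('u \<times> 'n) set \<Rightarrow> ('u,'m,'n) rule set" where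
  "necessary_rules_II U M I N J =
     {r \<in> rules_II U M I N J. \<not> (\<exists>r1 \<in> rules_II U M I N J - {r}. rule_implies r1 r)}"

definition S2_class ::
  "'u set \<Rightarrow> 'm set \<Rightarrow> ('u \<times> 'm) set \<Rightarrow> 'n set \<Rightarrow> ('u \<times> 'n) set \<Rightarrow> 'u set \<Rightarrow> 'u set set" where
  "S2_class U M I N J X =
     {Y \<in> Ext (L_P U N J). box_obj U M I X = box_obj U M I Y}"

end

theory Submission
  imports Defs
begin

text \<open>
  Write \<open>int O = O\<^sup>\<box>\<^sup>\<lozenge>\<close> (\<open>obj_interior\<close>) for the interior operator of the
  conditional context and \<open>cl O = O\<^sup>\<lozenge>\<^sup>\<box>\<close> (\<open>obj_closure\<close>) for the closure
  operator of the decision context. A II-decision rule is an \<open>int\<close>-open extent \<open>X\<close>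
  below a \<open>cl\<close>-closed extent \<open>Y\<close>, and replacing \<open>X\<close> by \<open>int Y\<close> or \<open>Y\<close> by
  \<open>cl X\<close> yields a rule implying the given one. Hence the necessary rules are exactly
  those with \<open>X = int Y\<close> and \<open>Y = cl X\<close>. For a closed \<open>Q\<close> the extent \<open>cl (int Q)\<close>
  is such a \<open>Y\<close>, and it is the least member of the \<open>S\<^sub>2\<close>-class of \<open>Q\<close>.
\<close>

abbreviation obj_interior :: "'u set \<Rightarrow> 'm set \<Rightarrow> ('u \<times> 'm) set \<Rightarrow> 'u set \<Rightarrow> 'u set" where
  "obj_interior U M I X \<equiv> dia_attr U M I (box_obj U M I X)"

abbreviation obj_closure :: "'u set \<Rightarrow> 'm set \<Rightarrow> ('u \<times> 'm) set \<Rightarrow> 'u set \<Rightarrow> 'u set" where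
  "obj_closure U M I X \<equiv> box_attr U M I (dia_obj U M I X)"

lemma box_obj_mono: "A \<subseteq> B \<Longrightarrow> box_obj U M I A \<subseteq> box_obj U M I B"
  unfolding box_obj_def by auto

lemma dia_attr_mono: "A \<subseteq> B \<Longrightarrow> dia_attr U M I A \<subseteq> dia_attr U M I B"
  unfolding dia_attr_def by auto

lemma dia_obj_mono: "A \<subseteq> B \<Longrightarrow> dia_obj U M I A \<subseteq> dia_obj U M I B"
  unfolding dia_obj_def by auto

lemma box_attr_mono: "A \<subseteq> B \<Longrightarrow> box_attr U M I A \<subseteq> box_attr U M I B"
  unfolding box_attr_def by auto

lemma box_obj_subset: "box_obj U M I X \<subseteq> M"
  unfolding box_obj_def by blast

lemma dia_attr_subset: "dia_attr U M I C \<subseteq> U"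
  unfolding dia_attr_def by blast

lemma dia_obj_subset: "dia_obj U M I X \<subseteq> M"
  unfolding dia_obj_def by blast

lemma box_attr_subset: "box_attr U M I C \<subseteq> U"
  unfolding box_attr_def by blast

lemma obj_interior_subset: "obj_interior U M I X \<subseteq> X"
  unfolding dia_attr_def box_obj_def by auto

lemma subset_obj_closure: "I \<subseteq> U \<times> M \<Longrightarrow> X \<subseteq> U \<Longrightarrow> X \<subseteq> obj_closure U M I X"
  unfolding dia_obj_def box_attr_def by auto

lemma box_obj_obj_interior:
  assumes "I \<subseteq> U \<times> M"
  shows "box_obj U M I (obj_interior U M I X) = box_obj U M I X"
proof
  show "box_obj U M I (obj_interior U M I X) \<subseteq> box_obj U M I X"
    by (rule box_obj_mono[OF obj_interior_subset])
  show "box_obj U M I X \<subseteq> box_obj U M I (obj_interior U M I X)"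
    using assms unfolding dia_attr_def box_obj_def by auto
qed

lemma dia_obj_obj_closure:
  assumes "I \<subseteq> U \<times> M" and "X \<subseteq> U"
  shows "dia_obj U M I (obj_closure U M I X) = dia_obj U M I X"
proof
  show "dia_obj U M I (obj_closure U M I X) \<subseteq> dia_obj U M I X"
    unfolding dia_obj_def box_attr_def by auto
  show "dia_obj U M I X \<subseteq> dia_obj U M I (obj_closure U M I X)"
    by (rule dia_obj_mono[OF subset_obj_closure[OF assms]])
qed

lemma obj_interior_greatest:
  "obj_interior U M I X = X \<Longrightarrow> X \<subseteq> Z \<Longrightarrow> X \<subseteq> obj_interior U M I Z"
  by (metis dia_attr_mono box_obj_mono)

lemma obj_closure_least:
  "obj_closure U M I Y = Y \<Longrightarrow> Z \<subseteq> Y \<Longrightarrow> obj_closure U M I Z \<subseteq> Y"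
  by (metis box_attr_mono dia_obj_mono)

lemma L_O_iff:
  "(X, C) \<in> L_O U M I \<longleftrightarrow> C = box_obj U M I X \<and> obj_interior U M I X = X"
  unfolding L_O_def using box_obj_subset dia_attr_subset by fastforce

lemma L_P_iff:
  "(Y, D) \<in> L_P U M I \<longleftrightarrow> D = dia_obj U M I Y \<and> obj_closure U M I Y = Y"
  unfolding L_P_def using dia_obj_subset box_attr_subset by fastforce

lemma Ext_L_P_iff: "Y \<in> Ext (L_P U M I) \<longleftrightarrow> obj_closure U M I Y = Y"
proof
  assume "Y \<in> Ext (L_P U M I)"
  then obtain D where "(Y, D) \<in> L_P U M I"
    unfolding Ext_def by force
  then show "obj_closure U M I Y = Y"
    by (simp add: L_P_iff)
next
  assume "obj_closure U M I Y = Y"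
  then have "(Y, dia_obj U M I Y) \<in> L_P U M I"
    by (simp add: L_P_iff)
  then show "Y \<in> Ext (L_P U M I)"
    unfolding Ext_def by force
qed

lemma obj_closure_in_Ext_L_P:
  "I \<subseteq> U \<times> M \<Longrightarrow> X \<subseteq> U \<Longrightarrow> obj_closure U M I X \<in> Ext (L_P U M I)"
  by (simp add: Ext_L_P_iff dia_obj_obj_closure)

lemma rules_II_iff:
  "((X, C), (Y, D)) \<in> rules_II U M I N J \<longleftrightarrow>
     C = box_obj U M I X \<and> obj_interior U M I X = X \<and>
     D = dia_obj U N J Y \<and> obj_closure U N J Y = Y \<and> X \<subseteq> Y"
  unfolding rules_II_def by (auto simp: L_O_iff L_P_iff)

lemma necessary_rules_IID:
  assumes "I \<subseteq> U \<times> M" and "J \<subseteq> U \<times> N"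
    and r: "((X, C), (Y, D)) \<in> necessary_rules_II U M I N J" (is "?r \<in> _")
  shows "X = obj_interior U M I Y" and "Y = obj_closure U N J X"
proof -
  from r have rule: "?r \<in> rules_II U M I N J"
    and minimal: "\<And>r'. r' \<in> rules_II U M I N J \<Longrightarrow> rule_implies r' ?r \<Longrightarrow> r' = ?r"
    unfolding necessary_rules_II_def by auto
  from rule have XY: "X \<subseteq> Y" and X_open: "obj_interior U M I X = X"
    and Y_closed: "obj_closure U N J Y = Y"
    by (simp_all add: rules_II_iff)
  have "X \<subseteq> U"
    using X_open dia_attr_subset by metis
  let ?X' = "obj_interior U M I Y" and ?Y' = "obj_closure U N J X"
  have "((?X', box_obj U M I ?X'), (Y, D)) \<in> rules_II U M I N J"
    using rule assms(1) obj_interior_subset[of U M I Y]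
    by (auto simp: rules_II_iff box_obj_obj_interior)
  moreover have "rule_implies ((?X', box_obj U M I ?X'), (Y, D)) ?r"
    unfolding rule_implies_def
    using obj_interior_greatest[OF X_open XY] obj_interior_subset[of U M I Y] by auto
  ultimately show "X = ?X'"
    using minimal by blast
  have "((X, C), (?Y', dia_obj U N J ?Y')) \<in> rules_II U M I N J"
    using rule subset_obj_closure[OF assms(2) \<open>X \<subseteq> U\<close>]
    by (simp add: rules_II_iff dia_obj_obj_closure[OF assms(2) \<open>X \<subseteq> U\<close>])
  moreover have "rule_implies ((X, C), (?Y', dia_obj U N J ?Y')) ?r"
    unfolding rule_implies_def
    using obj_closure_least[OF Y_closed XY] subset_obj_closure[OF assms(2) \<open>X \<subseteq> U\<close>] by auto
  ultimately show "Y = ?Y'"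
    using minimal by blast
qed

lemma necessary_rules_III:
  assumes r: "((X, C), (Y, D)) \<in> rules_II U M I N J" (is "?r \<in> _")
    and X: "X = obj_interior U M I Y" and Y: "Y = obj_closure U N J X"
  shows "?r \<in> necessary_rules_II U M I N J"
proof -
  have "r' = ?r" if r': "r' \<in> rules_II U M I N J" and "rule_implies r' ?r" for r'
  proof -
    obtain X' C' Y' D' where r'_def: "r' = ((X', C'), (Y', D'))"
      by (metis prod.collapse)
    from r' have C': "C' = box_obj U M I X'" and X'_open: "obj_interior U M I X' = X'"
      and D': "D' = dia_obj U N J Y'" and Y'_closed: "obj_closure U N J Y' = Y'"
      unfolding r'_def rules_II_iff by blast+
    have "X \<subseteq> X'" "X' \<subseteq> Y'" "Y' \<subseteq> Y"
      using \<open>rule_implies r' ?r\<close> unfolding r'_def rule_implies_def by auto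
    have "X' \<subseteq> obj_interior U M I Y"
      using obj_interior_greatest[OF X'_open] \<open>X' \<subseteq> Y'\<close> \<open>Y' \<subseteq> Y\<close> by blast
    with \<open>X \<subseteq> X'\<close> have "X' = X"
      unfolding X by blast
    have "obj_closure U N J X \<subseteq> Y'"
      using obj_closure_least[OF Y'_closed] \<open>X \<subseteq> X'\<close> \<open>X' \<subseteq> Y'\<close> by blast
    with \<open>Y' \<subseteq> Y\<close> have "Y' = Y"
      unfolding Y by blast
    show "r' = ?r"
      using r unfolding r'_def C' D' \<open>X' = X\<close> \<open>Y' = Y\<close> by (simp add: rules_II_iff)
  qed
  then show ?thesis
    unfolding necessary_rules_II_def using r by blast
qed

lemma box_obj_closure_of_interior:
  assumes "I \<subseteq> U \<times> M" and "J \<subseteq> U \<times> N" and "obj_closure U N J Q = Q"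
  shows "box_obj U M I (obj_closure U N J (obj_interior U M I Q)) = box_obj U M I Q"
proof (rule subset_antisym)
  have "obj_closure U N J (obj_interior U M I Q) \<subseteq> Q"
    using obj_closure_least[OF assms(3) obj_interior_subset] .
  then show "box_obj U M I (obj_closure U N J (obj_interior U M I Q)) \<subseteq> box_obj U M I Q"
    by (rule box_obj_mono)
  have "box_obj U M I Q = box_obj U M I (obj_interior U M I Q)"
    using box_obj_obj_interior[OF assms(1)] by simp
  also have "\<dots> \<subseteq> box_obj U M I (obj_closure U N J (obj_interior U M I Q))"
    by (intro box_obj_mono subset_obj_closure[OF assms(2) dia_attr_subset])
  finally show "box_obj U M I Q \<subseteq> box_obj U M I (obj_closure U N J (obj_interior U M I Q))" .
qed

lemma Inter_S2_class:
  assumes "I \<subseteq> U \<times> M" and "J \<subseteq> U \<times> N" and "Q \<in> Ext (L_P U N J)"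
  shows "\<Inter> (S2_class U M I N J Q) = obj_closure U N J (obj_interior U M I Q)"
proof (rule antisym)
  have "obj_closure U N J (obj_interior U M I Q) \<in> S2_class U M I N J Q"
    using box_obj_closure_of_interior[OF assms(1,2)] assms(3)
      obj_closure_in_Ext_L_P[OF assms(2) dia_attr_subset]
    unfolding S2_class_def Ext_L_P_iff by simp
  then show "\<Inter> (S2_class U M I N J Q) \<subseteq> obj_closure U N J (obj_interior U M I Q)"
    by blast
  have "obj_closure U N J (obj_interior U M I Q) \<subseteq> Y" if "Y \<in> S2_class U M I N J Q" for Y
  proof -
    from that have "obj_closure U N J Y = Y" and "box_obj U M I Q = box_obj U M I Y"
      by (simp_all add: S2_class_def Ext_L_P_iff)
    then show ?thesis
      using obj_closure_least obj_interior_subset[of U M I Y] by metis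
  qed
  then show "obj_closure U N J (obj_interior U M I Q) \<subseteq> \<Inter> (S2_class U M I N J Q)"
    by blast
qed

lemma necessary_rules_II_obtain:
  assumes "I \<subseteq> U \<times> M" and "J \<subseteq> U \<times> N" and "r \<in> necessary_rules_II U M I N J"
  obtains Y where "Y \<in> Ext (L_P U N J)" and "obj_closure U N J (obj_interior U M I Y) = Y"
    and "r = ((obj_interior U M I Y, box_obj U M I Y), (Y, dia_obj U N J Y))"
proof -
  obtain X C Y D where r_def: "r = ((X, C), (Y, D))"
    by (metis prod.collapse)
  from assms(3) have nec: "((X, C), (Y, D)) \<in> necessary_rules_II U M I N J"
    unfolding r_def .
  note X = necessary_rules_IID(1)[OF assms(1,2) nec]
    and Y = necessary_rules_IID(2)[OF assms(1,2) nec]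
  from nec have "((X, C), (Y, D)) \<in> rules_II U M I N J"
    unfolding necessary_rules_II_def by blast
  then have "C = box_obj U M I X" and "D = dia_obj U N J Y" and "Y \<in> Ext (L_P U N J)"
    by (simp_all add: rules_II_iff Ext_L_P_iff)
  moreover have "obj_closure U N J (obj_interior U M I Y) = Y"
    using Y unfolding X by (rule sym)
  ultimately show thesis
    using that unfolding r_def X by (simp add: box_obj_obj_interior[OF assms(1)])
qed

lemma closure_interior_in_necessary_rules_II:
  assumes "I \<subseteq> U \<times> M" and "J \<subseteq> U \<times> N" and "Q \<in> Ext (L_P U N J)"
  shows "((obj_interior U M I Q, box_obj U M I Q),
      (obj_closure U N J (obj_interior U M I Q),
       dia_obj U N J (obj_closure U N J (obj_interior U M I Q)))) \<in> necessary_rules_II U M I N J"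
proof (rule necessary_rules_III)
  let ?Z = "obj_interior U M I Q"
  have "box_obj U M I (obj_closure U N J ?Z) = box_obj U M I Q"
    using box_obj_closure_of_interior[OF assms(1,2)] assms(3) by (simp add: Ext_L_P_iff)
  then show "?Z = obj_interior U M I (obj_closure U N J ?Z)"
    by simp
  show "((?Z, box_obj U M I Q), (obj_closure U N J ?Z, dia_obj U N J (obj_closure U N J ?Z)))
      \<in> rules_II U M I N J"
    using subset_obj_closure[OF assms(2) dia_attr_subset]
    by (simp add: rules_II_iff box_obj_obj_interior[OF assms(1)]
        dia_obj_obj_closure[OF assms(2) dia_attr_subset])
qed (rule refl)

theorem theorem4p4:
  fixes U :: "'u set" and M :: "'m set" and I :: "('u \<times> 'm) set"
    and N :: "'n set" and J :: "('u \<times> 'n) set"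
  assumes "formal_context U M I" and "formal_context U N J"
    and "canonical U M I" and "canonical U N J"
  shows "necessary_rules_II U M I N J =
    {((dia_attr U M I (box_obj U M I X), box_obj U M I X),
      (\<Inter> (S2_class U M I N J X), dia_obj U N J (\<Inter> (S2_class U M I N J X)))) | X.
      X \<in> Ext (L_P U N J)}"
proof -
  have IM: "I \<subseteq> U \<times> M" and JN: "J \<subseteq> U \<times> N"
    using assms(1,2) unfolding formal_context_def by auto
  show ?thesis (is "_ = ?rules")
  proof (intro set_eqI iffI)
    fix r assume "r \<in> necessary_rules_II U M I N J"
    then obtain Y where Y: "Y \<in> Ext (L_P U N J)" "obj_closure U N J (obj_interior U M I Y) = Y"
      and r: "r = ((obj_interior U M I Y, box_obj U M I Y), (Y, dia_obj U N J Y))"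
      by (rule necessary_rules_II_obtain[OF IM JN])
    have "\<Inter> (S2_class U M I N J Y) = Y"
      using Inter_S2_class[OF IM JN Y(1)] Y(2) by simp
    moreover have "((obj_interior U M I Y, box_obj U M I Y),
        (\<Inter> (S2_class U M I N J Y), dia_obj U N J (\<Inter> (S2_class U M I N J Y)))) \<in> ?rules"
      using Y(1) by blast
    ultimately show "r \<in> ?rules"
      unfolding r by simp
  next
    fix r assume "r \<in> ?rules"
    then obtain Q where Q: "Q \<in> Ext (L_P U N J)" and r: "r =
      ((obj_interior U M I Q, box_obj U M I Q),
       (\<Inter> (S2_class U M I N J Q), dia_obj U N J (\<Inter> (S2_class U M I N J Q))))"
      by blast
    show "r \<in> necessary_rules_II U M I N J"
      unfolding r Inter_S2_class[OF IM JN Q] by (rule closure_interior_in_necessary_rules_II[OF IM JN Q])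
  qed
qed

end
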